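(* There exists a constant $C_0$ such that, almost surely, for every $C>0$ and $M>0$ the following holds for $t$ large enough: for all $x\in\mathbb R^2$ with $|x|\le Ct$ and all $v\in S^1$, if $\{e_k\}$ is a path of edges of $\mathcal V$ connecting $\pi_0(x)$ and $\pi_0(x+tv)$ (a test path for $m_0(x,x+tv)$) with $\#\{e_k\}\le tM$, then every point of $\bigcup_k e_k$ lies at distance at most $C_0Mt$ from $x$.
   Context: $\mathcal N$ is a Poisson random set of intensity $1$ in $\mathbb R^2$ on a probability space $(\Omega,\mathcal F,\mathbf P)$ equipped with an ergodic group of measure-preserving translations compatible with $\mathcal N$. Voronoi cells $C_i=\{x:|x-i|\le|x-j|\ \forall j\in\mathcal N\}$; $\mathcal V$ is the set of edges of Voronoi cells and $\mathcal N^*$ the set of their vertices. $\pi_0(x)$ is a closest point of $\mathcal N^*$ to $x$. A path of edges connecting two points $\bar x,\bar y$ is a collection of edges $[x_{k-1},x_k]\in\mathcal V$, $k=1,\dots,K$, with $x_0=\bar x$, $x_K=\bar y$, forming a non-self-intersecting polygonal curve; $m_0(x,y)$ is the minimal number of edges of such a path connecting $\pi_0(x)$ and $\pi_0(y)$. *)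

theory Defs
  imports "HOL-Probability.Probability"
begin

type_synonym pt = "real^2"

definition poisson_process :: "'w measure \<Rightarrow> ('w \<Rightarrow> pt set) \<Rightarrow> bool" where
  "poisson_process P N \<longleftrightarrow>
     prob_space P \<and>
     (\<forall>\<omega>\<in>space P. \<forall>B. bounded B \<longrightarrow> finite (N \<omega> \<inter> B)) \<and>
     (\<forall>A. A \<in> sets lborel \<and> bounded A \<longrightarrow>
        (\<forall>k::nat. measure P {\<omega> \<in> space P. card (N \<omega> \<inter> A) = k}
              = exp (- measure lborel A) * (measure lborel A) ^ k / fact k)) \<and>
     (\<forall>(I::nat set) (A::nat \<Rightarrow> pt set). finite I \<longrightarrow> disjoint_family_on A I \<longrightarrow>
        (\<forall>i\<in>I. A i \<in> sets lborel \<and> bounded (A i)) \<longrightarrow>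
        prob_space.indep_vars P (\<lambda>_. count_space UNIV) (\<lambda>i \<omega>. card (N \<omega> \<inter> A i)) I)"

definition voronoi_cell :: "pt set \<Rightarrow> pt \<Rightarrow> pt set" where
  "voronoi_cell S i = {x. \<forall>j\<in>S. dist x i \<le> dist x j}"

definition voronoi_edges :: "pt set \<Rightarrow> pt set set" where
  "voronoi_edges S = {e. \<exists>i\<in>S. \<exists>j\<in>S. i \<noteq> j \<and>
      (\<exists>a b. a \<noteq> b \<and> e = closed_segment a b \<and> voronoi_cell S i \<inter> voronoi_cell S j = e)}"

definition voronoi_vertices :: "pt set \<Rightarrow> pt set" where
  "voronoi_vertices S = {a. \<exists>b. a \<noteq> b \<and> closed_segment a b \<in> voronoi_edges S}"

definition closest_point :: "pt set \<Rightarrow> pt \<Rightarrow> pt \<Rightarrow> bool" where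
  "closest_point A x p \<longleftrightarrow> p \<in> A \<and> (\<forall>q\<in>A. dist x p \<le> dist x q)"

definition edge_path :: "pt set \<Rightarrow> pt list \<Rightarrow> bool" where
  "edge_path S xs \<longleftrightarrow> xs \<noteq> [] \<and>
     (\<forall>k. Suc k < length xs \<longrightarrow> closed_segment (xs!k) (xs!Suc k) \<in> voronoi_edges S) \<and>
     (\<forall>k l. k < l \<and> Suc l < length xs \<longrightarrow>
        closed_segment (xs!k) (xs!Suc k) \<inter> closed_segment (xs!l) (xs!Suc l)
          = (if l = Suc k then {xs!l} else {}))"

definition path_edges_union :: "pt list \<Rightarrow> pt set" where
  "path_edges_union xs = (\<Union>k\<in>{k. Suc k < length xs}. closed_segment (xs!k) (xs!Suc k))"

end

(*
  Tile the plane by 8 x 8 lattice squares and call a square occupied when the Poisson set meets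
  its central 4 x 4 box. There are at most 81^n self-avoiding king walks of n + 1 squares starting
  within n^2 squares of the origin, and a given set of at least (n + 1) / 2 central boxes is void
  with probability at most e^(-8 (n + 1)); as 2 * 162 < e^8, Borel-Cantelli shows that almost
  surely, from some scale n0 on, every such walk has more than half of its squares occupied.

  Deterministically, this puts a site within O(n) of every point of the disc of radius ~ n^2, so
  Voronoi cells there are small and contain vertices, and pi_0 moves points by O(n) only. A path
  of K Voronoi edges lies in the union of K cells; following it square by square gives a
  self-avoiding king walk whose occupied squares all lie within two squares of one of these K
  nuclei, so the walk has fewer than 50 K squares and the path stays within 16 (n + 1) + 800 K of
  its start. With n ~ t / 100, the distance t between the two ends forces 800 K to dominate the
  O(n) errors, so the whole path lies within 1600 K <= 1600 M t of x.
*)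

theory Submission
  imports Defs "HOL-Real_Asymp.Real_Asymp"
begin

section \<open>Voronoi cells of locally finite sets\<close>

definition locally_finite :: "'a::metric_space set \<Rightarrow> bool" where
  "locally_finite S \<longleftrightarrow> (\<forall>B. bounded B \<longrightarrow> finite (S \<inter> B))"

lemma dist_le_iff_inner:
  fixes x i j :: "'a::real_inner"
  shows "dist x i \<le> dist x j \<longleftrightarrow> (2 *\<^sub>R (j - i)) \<bullet> x \<le> j \<bullet> j - i \<bullet> i"
proof -
  have "dist x i \<le> dist x j \<longleftrightarrow> (dist x i)\<^sup>2 \<le> (dist x j)\<^sup>2"
    by (simp add: abs_le_square_iff[symmetric])
  also have "\<dots> \<longleftrightarrow> (x - i) \<bullet> (x - i) \<le> (x - j) \<bullet> (x - j)"
    by (simp add: dist_norm power2_norm_eq_inner)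
  also have "\<dots> \<longleftrightarrow> (2 *\<^sub>R (j - i)) \<bullet> x \<le> j \<bullet> j - i \<bullet> i"
    by (simp add: inner_commute algebra_simps)
  finally show ?thesis .
qed

lemma voronoi_cell_eq_halfspaces:
  "voronoi_cell S i = (\<Inter>j\<in>S. {x. (2 *\<^sub>R (j - i)) \<bullet> x \<le> j \<bullet> j - i \<bullet> i})"
  unfolding voronoi_cell_def by (auto simp: dist_le_iff_inner)

lemma convex_voronoi_cell: "convex (voronoi_cell S i)"
  unfolding voronoi_cell_eq_halfspaces by (intro convex_INT convex_halfspace_le)

lemma closed_voronoi_cell: "closed (voronoi_cell S i)"
  unfolding voronoi_cell_eq_halfspaces by (intro closed_INT ballI closed_halfspace_le)

lemma center_in_voronoi_cell: "i \<in> voronoi_cell S i"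
  by (simp add: voronoi_cell_def)

lemma collinear_equidistant:
  fixes i j :: pt
  assumes "i \<noteq> j"
  shows "collinear {x. dist x i = dist x j}"
proof -
  have "{x. dist x i = dist x j} = {x. (2 *\<^sub>R (j - i)) \<bullet> x = j \<bullet> j - i \<bullet> i}"
  proof -
    have "dist x i = dist x j \<longleftrightarrow> (2 *\<^sub>R (j - i)) \<bullet> x = j \<bullet> j - i \<bullet> i" for x
    proof -
      have "(2 *\<^sub>R (i - j)) \<bullet> x = - ((2 *\<^sub>R (j - i)) \<bullet> x)"
        by (simp add: inner_diff_left)
      then show ?thesis
        using dist_le_iff_inner[of x i j] dist_le_iff_inner[of x j i] by argo
    qed
    then show ?thesis by blast
  qed
  moreover have "aff_dim \<dots> = 1"
    using aff_dim_hyperplane[of "2 *\<^sub>R (j - i)"] assms by simp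
  ultimately show ?thesis by (simp add: collinear_aff_dim)
qed

lemma frontier_voronoi_cell_equidistant:
  assumes lf: "locally_finite S" and "i \<in> S" and b: "b \<in> frontier (voronoi_cell S i)"
  shows "\<exists>j\<in>S. j \<noteq> i \<and> dist b j = dist b i"
proof (rule ccontr)
  assume none: "\<not> ?thesis"
  have "b \<in> voronoi_cell S i"
    using b closed_voronoi_cell frontier_subset_closed by blast
  then have closer: "dist b i < dist b j" if "j \<in> S" "j \<noteq> i" for j
    using none that by (force simp: voronoi_cell_def)
  define F where "F = S \<inter> cball b (dist b i + 1) - {i}"
  have "finite F"
    using lf unfolding F_def locally_finite_def by (auto intro: finite_subset)
  define U where "U = ball b (1/2) \<inter> (\<Inter>j\<in>F. {z. dist z i < dist z j})"
  have "open U"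
    unfolding U_def using \<open>finite F\<close>
    by (intro open_Int open_INT ballI open_Collect_less continuous_on_dist continuous_on_id continuous_on_const) simp_all
  moreover have "b \<in> U"
    unfolding U_def F_def using closer by auto
  moreover have "U \<subseteq> voronoi_cell S i"
  proof
    fix z assume z: "z \<in> U"
    have "dist z i \<le> dist z j" if "j \<in> S" for j
    proof (cases "j \<in> F \<or> j = i")
      case True
      then show ?thesis using z unfolding U_def by auto
    next
      case False
      then have "dist b i + 1 < dist b j" using \<open>j \<in> S\<close> unfolding F_def by auto
      then show ?thesis
        using z dist_triangle[of b j z] dist_triangle[of z i b] unfolding U_def by (simp add: dist_commute)
    qed
    then show "z \<in> voronoi_cell S i" by (simp add: voronoi_cell_def)
  qed
  ultimately have "b \<in> interior (voronoi_cell S i)"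
    by (rule interiorI)
  then show False using b by (simp add: frontier_def)
qed

lemma infinite_sphere:
  fixes a :: "'a::euclidean_space"
  assumes "2 \<le> DIM('a)" and "r > 0"
  shows "infinite (sphere a r)"
proof -
  obtain e :: 'a where e: "norm e = r"
    using vector_choose_size[of r] \<open>r > 0\<close> by auto
  then have "a + e \<in> sphere a r" "a - e \<in> sphere a r"
    by (auto simp: dist_norm)
  moreover have "a + e \<noteq> a - e"
    using e \<open>r > 0\<close> by (auto simp: eq_neg_iff_add_eq_0 scaleR_2[symmetric])
  ultimately show ?thesis
    using connected_uncountable connected_sphere[OF assms(1)] countable_finite by blast
qed

lemma infinite_frontier_bounded_voronoi_cell:
  assumes lf: "locally_finite S" and "i \<in> S" and bdd: "voronoi_cell S i \<subseteq> cball i \<rho>"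
  shows "infinite (frontier (voronoi_cell S i))"
proof
  let ?C = "voronoi_cell S i"
  assume fin: "finite (frontier ?C)"
  define r where "r = \<rho> + 1"
  have "r > 0"
    using bdd center_in_voronoi_cell[of i S] unfolding r_def by auto
  define radial where "radial b = i + (r / norm (b - i)) *\<^sub>R (b - i)" for b
  (* radial projection from i maps the frontier onto the circle: every ray leaves the bounded cell *)
  have "sphere i r \<subseteq> radial ` frontier ?C"
  proof
    fix s assume s: "s \<in> sphere i r"
    then have "s \<notin> ?C"
      using bdd unfolding r_def by auto
    then obtain b where b: "b \<in> closed_segment i s" "b \<in> frontier ?C"
      using connected_Int_frontier[of "closed_segment i s" ?C] center_in_voronoi_cell[of i S] by blast
    then obtain u where u: "0 \<le> u" "u \<le> 1" "b - i = u *\<^sub>R (s - i)"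
      by (auto simp: in_segment algebra_simps)
    have "b \<noteq> i"
      using frontier_voronoi_cell_equidistant[OF lf \<open>i \<in> S\<close> b(2)] by auto
    then have "u > 0"
      using u by (cases "u = 0") auto
    moreover have "norm (s - i) = r"
      using s by (simp add: dist_norm norm_minus_commute)
    ultimately have "radial b = s"
      unfolding radial_def using u \<open>r > 0\<close> by simp
    then show "s \<in> radial ` frontier ?C"
      using b(2) by blast
  qed
  moreover have "infinite (sphere i r)"
    using \<open>r > 0\<close> by (intro infinite_sphere) simp_all
  ultimately show False
    using fin finite_surj by blast
qed

lemma voronoi_cells_Int_infinite:
  assumes lf: "locally_finite S" and "i \<in> S" and bdd: "voronoi_cell S i \<subseteq> cball i \<rho>"
  shows "\<exists>j\<in>S. j \<noteq> i \<and> infinite (voronoi_cell S i \<inter> voronoi_cell S j)"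
proof (rule ccontr)
  assume none: "\<not> ?thesis"
  define J where "J = S \<inter> cball i (2 * \<rho>) - {i}"
  have "finite J"
    using lf unfolding J_def locally_finite_def by (auto intro: finite_subset)
  have "frontier (voronoi_cell S i) \<subseteq> (\<Union>j\<in>J. voronoi_cell S i \<inter> voronoi_cell S j)"
  proof
    fix b assume b: "b \<in> frontier (voronoi_cell S i)"
    then obtain j where j: "j \<in> S" "j \<noteq> i" "dist b j = dist b i"
      using frontier_voronoi_cell_equidistant[OF lf \<open>i \<in> S\<close>] by blast
    have "b \<in> voronoi_cell S i"
      using b closed_voronoi_cell frontier_subset_closed by blast
    moreover from this have "b \<in> voronoi_cell S j"
      using j(3) by (simp add: voronoi_cell_def)
    moreover have "dist i j \<le> 2 * \<rho>"
      using bdd \<open>b \<in> voronoi_cell S i\<close> dist_triangle[of i j b] j(3) by (auto simp: dist_commute)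
    ultimately show "b \<in> (\<Union>j\<in>J. voronoi_cell S i \<inter> voronoi_cell S j)"
      using j unfolding J_def by auto
  qed
  moreover have "finite (\<Union>j\<in>J. voronoi_cell S i \<inter> voronoi_cell S j)"
    using \<open>finite J\<close> none unfolding J_def by (intro finite_UN_I) auto
  ultimately show False
    using infinite_frontier_bounded_voronoi_cell[OF assms] finite_subset by blast
qed

lemma voronoi_vertex_in_bounded_cell:
  assumes lf: "locally_finite S" and "i \<in> S" and bdd: "voronoi_cell S i \<subseteq> cball i \<rho>"
  shows "\<exists>v\<in>voronoi_vertices S. v \<in> voronoi_cell S i"
proof -
  obtain j where j: "j \<in> S" "j \<noteq> i" and inf: "infinite (voronoi_cell S i \<inter> voronoi_cell S j)"
    using voronoi_cells_Int_infinite[OF assms] by blast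
  let ?T = "voronoi_cell S i \<inter> voronoi_cell S j"
  have "?T \<subseteq> cball i \<rho>"
    using bdd by auto
  then have "compact ?T"
    using bounded_subset[OF bounded_cball]
    by (simp add: compact_eq_bounded_closed closed_Int closed_voronoi_cell)
  moreover have "convex ?T"
    by (simp add: convex_Int convex_voronoi_cell)
  moreover have "?T \<subseteq> {x. dist x i = dist x j}"
    using \<open>i \<in> S\<close> j(1) by (auto simp: voronoi_cell_def intro: order.antisym)
  then have "collinear ?T"
    using j(2) by (intro collinear_subset[OF collinear_equidistant]) auto
  moreover have "?T \<noteq> {}"
    using inf by auto
  ultimately obtain a c where ac: "?T = closed_segment a c"
    using compact_convex_collinear_segment by blast
  then have "a \<noteq> c"
    using inf by auto
  then have "a \<in> voronoi_vertices S"
    unfolding voronoi_vertices_def voronoi_edges_def using \<open>i \<in> S\<close> j ac by blast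
  then show ?thesis
    using ac by auto
qed

lemma voronoi_cell_subset_cball:
  assumes covered: "\<And>z. dist z i \<le> \<rho> + 1 \<Longrightarrow> \<exists>j\<in>S. dist z j \<le> \<rho>" and "\<rho> \<ge> 0"
  shows "voronoi_cell S i \<subseteq> cball i \<rho>"
proof
  fix z assume z: "z \<in> voronoi_cell S i"
  show "z \<in> cball i \<rho>"
  proof (rule ccontr)
    assume "z \<notin> cball i \<rho>"
    then have far: "\<rho> < dist i z" by simp
    define e where "e = min 1 (dist i z - \<rho>) / 2"
    have e: "0 < e" "e < 1" "\<rho> + e < dist i z"
      using far unfolding e_def by (auto simp: min_def field_simps)
    define u where "u = (\<rho> + e) / dist i z"
    have u: "0 \<le> u" "u \<le> 1"
      using e \<open>\<rho> \<ge> 0\<close> unfolding u_def by (auto simp: divide_le_eq_1)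
    define z' where "z' = (1 - u) *\<^sub>R i + u *\<^sub>R z"
    have "z' \<in> closed_segment i z"
      unfolding z'_def in_segment using u by blast
    then have "z' \<in> voronoi_cell S i"
      using convex_voronoi_cell[of S i] z center_in_voronoi_cell[of i S]
      unfolding convex_contains_segment by blast
    moreover have "dist z' i = \<rho> + e"
    proof -
      have "z' - i = u *\<^sub>R (z - i)"
        unfolding z'_def by (simp add: algebra_simps)
      then have "dist z' i = u * dist i z"
        using u by (simp add: dist_norm norm_minus_commute)
      moreover have "dist i z \<noteq> 0"
        using far \<open>\<rho> \<ge> 0\<close> by linarith
      ultimately show ?thesis
        unfolding u_def by simp
    qed
    moreover obtain j where "j \<in> S" "dist z' j \<le> \<rho>"
      using covered[of z'] \<open>dist z' i = \<rho> + e\<close> e by auto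
    ultimately have "\<rho> + e \<le> \<rho>"
      unfolding voronoi_cell_def by fastforce
    then show False
      using e by simp
  qed
qed

section \<open>Occupied lattice squares\<close>

definition square_of :: "pt \<Rightarrow> int \<times> int" where
  "square_of x = (\<lfloor>x$1 / 8\<rfloor>, \<lfloor>x$2 / 8\<rfloor>)"

(* Only the central 4 x 4 box counts, so that the boxes of distinct squares are disjoint. *)
definition inner_box :: "int \<times> int \<Rightarrow> pt set" where
  "inner_box Z = cbox (\<chi> k. 8 * real_of_int (if k = 1 then fst Z else snd Z) + 2)
                      (\<chi> k. 8 * real_of_int (if k = 1 then fst Z else snd Z) + 6)"

definition occupied :: "pt set \<Rightarrow> int \<times> int \<Rightarrow> bool" where
  "occupied S Z \<longleftrightarrow> S \<inter> inner_box Z \<noteq> {}"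

definition king_adj :: "int \<times> int \<Rightarrow> int \<times> int \<Rightarrow> bool" where
  "king_adj Z Z' \<longleftrightarrow> \<bar>fst Z - fst Z'\<bar> \<le> 1 \<and> \<bar>snd Z - snd Z'\<bar> \<le> 1"

definition central_squares :: "nat \<Rightarrow> (int \<times> int) set" where
  "central_squares n = {- int (n * n)..int (n * n)} \<times> {- int (n * n)..int (n * n)}"

definition king_walks :: "nat \<Rightarrow> (int \<times> int) list set" where
  "king_walks n = {w. successively king_adj w \<and> distinct w \<and> length w = Suc n \<and> hd w \<in> central_squares n}"

definition well_occupied :: "pt set \<Rightarrow> nat \<Rightarrow> bool" where
  "well_occupied S n0 \<longleftrightarrow> (\<forall>n\<ge>n0. \<forall>w\<in>king_walks n. Suc n < 2 * card {Z\<in>set w. occupied S Z})"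

lemma square_of_bounds:
  "8 * real_of_int (fst (square_of x)) \<le> x$1" "x$1 < 8 * real_of_int (fst (square_of x)) + 8"
  "8 * real_of_int (snd (square_of x)) \<le> x$2" "x$2 < 8 * real_of_int (snd (square_of x)) + 8"
  unfolding square_of_def fst_conv snd_conv
  using of_int_floor_le[of "x$1 / 8"] real_of_int_floor_add_one_gt[of "x$1 / 8"]
    of_int_floor_le[of "x$2 / 8"] real_of_int_floor_add_one_gt[of "x$2 / 8"] by linarith+

lemma abs_floor_divide_diff_le:
  fixes a b d :: real
  assumes "d > 0" and "\<bar>a - b\<bar> \<le> d * real c"
  shows "\<bar>\<lfloor>a / d\<rfloor> - \<lfloor>b / d\<rfloor>\<bar> \<le> int c"
proof -
  have "\<bar>a / d - b / d\<bar> \<le> real c"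
    using assms by (simp add: diff_divide_distrib[symmetric] pos_divide_le_eq mult.commute)
  then have "real_of_int (\<lfloor>a / d\<rfloor> - \<lfloor>b / d\<rfloor>) < real c + 1"
    "real_of_int (\<lfloor>a / d\<rfloor> - \<lfloor>b / d\<rfloor>) > - real c - 1"
    using of_int_floor_le[of "a / d"] real_of_int_floor_add_one_gt[of "a / d"]
      of_int_floor_le[of "b / d"] real_of_int_floor_add_one_gt[of "b / d"]
    unfolding abs_le_iff by linarith+
  then show ?thesis
    by linarith
qed

lemma mem_inner_box:
  "x \<in> inner_box Z \<longleftrightarrow>
     8 * real_of_int (fst Z) + 2 \<le> x$1 \<and> x$1 \<le> 8 * real_of_int (fst Z) + 6 \<and>
     8 * real_of_int (snd Z) + 2 \<le> x$2 \<and> x$2 \<le> 8 * real_of_int (snd Z) + 6"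
  unfolding inner_box_def mem_box_cart forall_2 by simp

lemma dist_le_components: "dist x y \<le> \<bar>x$1 - y$1\<bar> + \<bar>x$2 - y$2\<bar>" for x y :: pt
  using norm_le_l1_cart[of "x - y"] by (simp add: dist_norm sum_2)

lemma abs_component_le_dist: "\<bar>x$k - y$k\<bar> \<le> dist x y" for x y :: "real^'n"
  using component_le_norm_cart[of "x - y" k] by (simp add: dist_norm)

lemma square_of_mem_central_squares:
  assumes "norm x \<le> 8 * real (n * n)"
  shows "square_of x \<in> central_squares n"
proof -
  have "\<bar>x$k - 0\<bar> \<le> 8 * real (n * n)" for k
    using component_le_norm_cart[of x k] assms by simp
  from abs_floor_divide_diff_le[OF _ this] have h: "\<bar>\<lfloor>x$k / 8\<rfloor>\<bar> \<le> int (n * n)" for k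
    by simp
  show ?thesis
    unfolding central_squares_def square_of_def using h[of 1] h[of 2] by (simp add: abs_le_iff)
qed

lemma well_occupied_site_near:
  assumes "well_occupied S n0" "n0 \<le> n" "square_of z \<in> central_squares n"
  shows "\<exists>j\<in>S. dist z j \<le> 8 * real n + 12"
proof -
  obtain a b where ab: "square_of z = (a, b)"
    by (cases "square_of z")
  define w where "w = map (\<lambda>k. (a + int k, b)) [0..<Suc n]"
  have len: "length w = Suc n"
    unfolding w_def by simp
  have nth: "w ! k = (a + int k, b)" if "k < Suc n" for k
    using that unfolding w_def by (simp del: upt_Suc)
  have "successively king_adj w"
    unfolding successively_conv_nth using nth len by (simp add: king_adj_def)
  moreover have "distinct w"
    unfolding w_def by (simp add: distinct_map inj_on_def del: upt_Suc)
  moreover have "hd w = (a, b)"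
    using nth[of 0] len by (cases w) auto
  ultimately have "w \<in> king_walks n"
    using assms(3) ab len unfolding king_walks_def by simp
  then have "Suc n < 2 * card {Z\<in>set w. occupied S Z}"
    using assms(1,2) unfolding well_occupied_def by blast
  then have "{Z\<in>set w. occupied S Z} \<noteq> {}"
    by (intro notI) simp
  then obtain k where k: "k \<le> n" "occupied S (a + int k, b)"
    unfolding w_def by (auto simp del: upt_Suc simp: less_Suc_eq_le)
  then obtain j where j: "j \<in> S" "j \<in> inner_box (a + int k, b)"
    unfolding occupied_def by auto
  have "\<bar>z$1 - j$1\<bar> \<le> 8 * real n + 6" "\<bar>z$2 - j$2\<bar> \<le> 6"
    using j(2) square_of_bounds[of z] ab k(1) unfolding mem_inner_box by (auto simp: abs_le_iff)
  then have "dist z j \<le> 8 * real n + 12"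
    using dist_le_components[of z j] by linarith
  then show ?thesis
    using j(1) by blast
qed

lemma voronoi_vertex_near:
  assumes occ: "well_occupied S n0" and lf: "locally_finite S" and "n0 \<le> n"
    and x: "norm x + 24 * real n + 38 \<le> 8 * real (n * n)"
  shows "\<exists>v\<in>voronoi_vertices S. dist x v \<le> 16 * real n + 24"
proof -
  let ?r = "8 * real n + 12"
  have near: "\<exists>j\<in>S. dist z j \<le> ?r" if "dist z x \<le> 2 * ?r + 1" for z
  proof -
    have "norm z \<le> 8 * real (n * n)"
      using x that norm_triangle_ineq2[of z x] unfolding dist_norm by (simp add: algebra_simps)
    then show ?thesis
      using well_occupied_site_near[OF occ \<open>n0 \<le> n\<close>] square_of_mem_central_squares by blast
  qed
  have "\<exists>j\<in>S. dist x j \<le> ?r"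
    by (rule near) simp
  then obtain i where i: "i \<in> S" "dist x i \<le> ?r" ..
  have "voronoi_cell S i \<subseteq> cball i ?r"
  proof (rule voronoi_cell_subset_cball)
    fix z assume "dist z i \<le> ?r + 1"
    then have "dist z x \<le> 2 * ?r + 1"
      using i(2) dist_triangle[of z x i] by (simp add: dist_commute)
    then show "\<exists>j\<in>S. dist z j \<le> ?r"
      by (rule near)
  qed simp
  moreover obtain v where v: "v \<in> voronoi_vertices S" "v \<in> voronoi_cell S i"
    using voronoi_vertex_in_bounded_cell[OF lf i(1) \<open>voronoi_cell S i \<subseteq> cball i ?r\<close>] by blast
  ultimately have "dist i v \<le> ?r"
    by auto
  then have "dist x v \<le> 16 * real n + 24"
    using i(2) dist_triangle[of x v i] by linarith
  then show ?thesis
    using v(1) by blast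
qed

section \<open>Paths of Voronoi edges\<close>

lemma connected_imp_dist_chain:
  fixes U :: "'a::metric_space set"
  assumes "connected U" "a \<in> U" "b \<in> U" "e > 0"
  shows "\<exists>qs. qs \<noteq> [] \<and> hd qs = a \<and> last qs = b \<and> set qs \<subseteq> U \<and>
    successively (\<lambda>x y. dist x y < e) qs"
    (is "?P b")
proof (rule connected_induction_simple[of U a b ?P])
  show "?P a"
    using \<open>a \<in> U\<close> by (intro exI[of _ "[a]"]) simp
next
  fix c assume "c \<in> U"
  show "\<exists>T. openin (top_of_set U) T \<and> c \<in> T \<and> (\<forall>x\<in>T. \<forall>y\<in>T. ?P x \<longrightarrow> ?P y)"
  proof (intro exI[of _ "U \<inter> ball c (e / 2)"] conjI ballI impI)
    show "openin (top_of_set U) (U \<inter> ball c (e / 2))"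
      by (simp add: openin_open_Int)
    show "c \<in> U \<inter> ball c (e / 2)"
      using \<open>c \<in> U\<close> \<open>e > 0\<close> by simp
    fix x y assume x: "x \<in> U \<inter> ball c (e / 2)" and y: "y \<in> U \<inter> ball c (e / 2)" and "?P x"
    then obtain qs where qs: "qs \<noteq> []" "hd qs = a" "last qs = x" "set qs \<subseteq> U"
      "successively (\<lambda>x y. dist x y < e) qs" by blast
    have "dist x y < e"
      using x y dist_triangle_half_l[of x c e y] by (simp add: dist_commute)
    then show "?P y"
      using qs y by (intro exI[of _ "qs @ [y]"]) (simp add: successively_append_iff)
  qed
qed (use assms in auto)

lemma path_edges_union_Cons_Cons:
  "path_edges_union (u # v # r) = closed_segment u v \<union> path_edges_union (v # r)"
proof -
  have "{k. Suc k < length xs} = {..<length xs - 1}" for xs :: "pt list"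
    by auto
  then have "path_edges_union xs = (\<Union>k<length xs - 1. closed_segment (xs ! k) (xs ! Suc k))" for xs
    unfolding path_edges_union_def by presburger
  then show ?thesis
    by (simp add: lessThan_Suc_eq_insert_0)
qed

lemma connected_path_edges_union: "connected (path_edges_union xs)"
proof (induction xs rule: induct_list012)
  case (3 u v r)
  show ?case
  proof (cases r)
    case Nil
    then show ?thesis
      by (simp add: path_edges_union_Cons_Cons path_edges_union_def)
  next
    case (Cons w r')
    then have "v \<in> path_edges_union (v # r)"
      by (simp add: path_edges_union_Cons_Cons)
    then show ?thesis
      using "3.IH"(2) by (subst path_edges_union_Cons_Cons) (intro connected_Un; auto)
  qed
qed (simp_all add: path_edges_union_def)

lemma endpoints_in_path_edges_union:
  assumes "2 \<le> length xs"
  shows "hd xs \<in> path_edges_union xs" "last xs \<in> path_edges_union xs"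
proof -
  have "xs \<noteq> []"
    using assms by auto
  have "hd xs \<in> closed_segment (xs ! 0) (xs ! Suc 0)"
    using \<open>xs \<noteq> []\<close> by (simp add: hd_conv_nth)
  then show "hd xs \<in> path_edges_union xs"
    unfolding path_edges_union_def using assms by force
  let ?k = "length xs - 2"
  have "last xs \<in> closed_segment (xs ! ?k) (xs ! Suc ?k)"
    using assms \<open>xs \<noteq> []\<close> by (simp add: last_conv_nth Suc_diff_Suc numeral_2_eq_2)
  then show "last xs \<in> path_edges_union xs"
    unfolding path_edges_union_def using assms by force
qed

lemma king_adj_square_of:
  assumes "dist x y \<le> 8"
  shows "king_adj (square_of x) (square_of y)"
proof -
  have "\<bar>x$k - y$k\<bar> \<le> 8 * real 1" for k
    using abs_component_le_dist[of x k y] assms by simp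
  from abs_floor_divide_diff_le[OF _ this] show ?thesis
    unfolding king_adj_def square_of_def by simp
qed

lemma successively_distinct_sublist:
  assumes "successively R w" "w \<noteq> []"
  shows "\<exists>w'. successively R w' \<and> distinct w' \<and> w' \<noteq> [] \<and> hd w' = hd w \<and> last w' = last w \<and>
    set w' \<subseteq> set w"
  using assms
proof (induction "length w" arbitrary: w rule: less_induct)
  case less
  show ?case
  proof (cases "distinct w")
    case True
    then show ?thesis
      using less.prems by blast
  next
    case False
    then obtain xs ys zs y where w: "w = xs @ [y] @ ys @ [y] @ zs"
      using not_distinct_decomp by blast
    define v where "v = xs @ [y] @ zs"
    have "successively R ((xs @ [y]) @ (ys @ [y] @ zs))" "successively R ((xs @ [y] @ ys) @ ([y] @ zs))"
      using less.prems(1) unfolding w by simp_all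
    then have "successively R (xs @ [y])" "successively R ([y] @ zs)"
      unfolding successively_append_iff by blast+
    then have "successively R v"
      unfolding v_def by (auto simp: successively_append_iff)
    moreover have "length v < length w"
      unfolding v_def w by simp
    ultimately obtain w' where "successively R w'" "distinct w'" "w' \<noteq> []" "hd w' = hd v"
      "last w' = last v" "set w' \<subseteq> set v"
      using less.hyps[of v] unfolding v_def by blast
    moreover have "hd v = hd w"
      unfolding v_def w by (cases xs) auto
    moreover have "last v = last w"
      unfolding v_def w by (cases zs rule: rev_cases) auto
    moreover have "set v \<subseteq> set w"
      unfolding v_def w by auto
    ultimately show ?thesis
      by auto
  qed
qed

lemma king_walk_displacement:
  assumes "successively king_adj w" "w \<noteq> []"
  shows "\<bar>fst (last w) - fst (hd w)\<bar> \<le> int (length w) - 1 \<and> \<bar>snd (last w) - snd (hd w)\<bar> \<le> int (length w) - 1"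
  using assms
proof (induction w rule: induct_list012)
  case (3 u v r)
  then show ?case
    by (auto simp: king_adj_def)
qed simp_all

lemma dist_le_of_square_of:
  assumes "\<bar>fst (square_of y) - fst (square_of p)\<bar> \<le> int n"
    and "\<bar>snd (square_of y) - snd (square_of p)\<bar> \<le> int n"
  shows "dist y p \<le> 16 * (real n + 1)"
proof -
  have "\<bar>real_of_int (fst (square_of y)) - real_of_int (fst (square_of p))\<bar> \<le> real n"
    "\<bar>real_of_int (snd (square_of y)) - real_of_int (snd (square_of p))\<bar> \<le> real n"
    using assms by (simp_all add: of_int_abs[symmetric] del: of_int_abs)
  then have "\<bar>y$1 - p$1\<bar> \<le> 8 * (real n + 1)" "\<bar>y$2 - p$2\<bar> \<le> 8 * (real n + 1)"
    using square_of_bounds[of y] square_of_bounds[of p] by (auto simp: abs_le_iff)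
  then show ?thesis
    using dist_le_components[of y p] by linarith
qed

lemma path_edges_union_king_walk:
  assumes "y \<in> path_edges_union xs"
  obtains w where "successively king_adj w" "distinct w" "w \<noteq> []"
    "hd w = square_of (hd xs)" "last w = square_of y" "set w \<subseteq> square_of ` path_edges_union xs"
proof -
  have "2 \<le> length xs"
    using assms unfolding path_edges_union_def by auto
  then obtain qs where qs: "qs \<noteq> []" "hd qs = hd xs" "last qs = y" "set qs \<subseteq> path_edges_union xs"
    "successively (\<lambda>x y. dist x y < 8) qs"
    using connected_imp_dist_chain[OF connected_path_edges_union _ assms, of "hd xs" 8]
      endpoints_in_path_edges_union by auto
  have "successively king_adj (map square_of qs)"
    unfolding successively_map using qs(5) by (rule successively_mono) (simp add: king_adj_square_of)
  then obtain w where w: "successively king_adj w" "distinct w" "w \<noteq> []"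
    "hd w = hd (map square_of qs)" "last w = last (map square_of qs)" "set w \<subseteq> set (map square_of qs)"
    using successively_distinct_sublist qs(1) by blast
  show ?thesis
  proof (rule that[OF w(1-3)])
    show "hd w = square_of (hd xs)" "last w = square_of y"
      using w(4,5) qs(1-3) by (simp_all add: hd_map last_map)
    show "set w \<subseteq> square_of ` path_edges_union xs"
      using w(6) qs(4) by auto
  qed
qed

lemma edge_path_nearest_sites:
  assumes "edge_path S xs"
  obtains A where "finite A" "card A \<le> length xs - 1"
    "\<And>y. y \<in> path_edges_union xs \<Longrightarrow> \<exists>c\<in>A. \<forall>j\<in>S. dist y c \<le> dist y j"
proof -
  let ?K = "{..<length xs - 1}"
  have "\<exists>i. closed_segment (xs!k) (xs!Suc k) \<subseteq> voronoi_cell S i" if "k \<in> ?K" for k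
  proof -
    have "closed_segment (xs!k) (xs!Suc k) \<in> voronoi_edges S"
      using assms that unfolding edge_path_def by auto
    then show ?thesis
      unfolding voronoi_edges_def by blast
  qed
  then have "\<forall>k\<in>?K. \<exists>i. closed_segment (xs!k) (xs!Suc k) \<subseteq> voronoi_cell S i"
    by blast
  then obtain site where site: "\<forall>k\<in>?K. closed_segment (xs!k) (xs!Suc k) \<subseteq> voronoi_cell S (site k)"
    by (rule bchoice[THEN exE])
  show ?thesis
  proof
    show "finite (site ` ?K)" "card (site ` ?K) \<le> length xs - 1"
      using card_image_le[of ?K site] by auto
    fix y assume "y \<in> path_edges_union xs"
    then obtain k where "Suc k < length xs" "y \<in> closed_segment (xs!k) (xs!Suc k)"
      unfolding path_edges_union_def by auto
    then have "site k \<in> site ` ?K" "y \<in> voronoi_cell S (site k)"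
      using site by auto
    then show "\<exists>c\<in>site ` ?K. \<forall>j\<in>S. dist y c \<le> dist y j"
      unfolding voronoi_cell_def by blast
  qed
qed

lemma card_occupied_squares_le:
  assumes "finite A"
    and near: "\<And>Z. Z \<in> set w \<Longrightarrow> \<exists>y. square_of y = Z \<and> (\<exists>c\<in>A. \<forall>j\<in>S. dist y c \<le> dist y j)"
  shows "card {Z\<in>set w. occupied S Z} \<le> 25 * card A"
proof -
  define around where
    "around c = {fst (square_of c) - 2..fst (square_of c) + 2} \<times> {snd (square_of c) - 2..snd (square_of c) + 2}" for c
  (* A site in the central box of Z is within 16 of every point y of Z, hence so is the nucleus c
     nearest to y, and then Z lies within two squares of the square of c. *)
  have "{Z\<in>set w. occupied S Z} \<subseteq> (\<Union>c\<in>A. around c)"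
  proof
    fix Z assume "Z \<in> {Z\<in>set w. occupied S Z}"
    then obtain y c j where y: "square_of y = Z" and "c \<in> A" and c: "\<forall>j\<in>S. dist y c \<le> dist y j"
      and j: "j \<in> S" "j \<in> inner_box Z"
      using near unfolding occupied_def by blast
    have "\<bar>y$1 - j$1\<bar> \<le> 8" "\<bar>y$2 - j$2\<bar> \<le> 8"
      using j(2) square_of_bounds[of y] unfolding y mem_inner_box by (auto simp: abs_le_iff)
    then have "dist y c \<le> 16"
      using dist_le_components[of y j] c j(1) by fastforce
    then have "\<bar>c$k - y$k\<bar> \<le> 8 * real 2" for k
      using abs_component_le_dist[of y k c] by (simp add: abs_minus_commute)
    from abs_floor_divide_diff_le[OF _ this] have h: "\<bar>\<lfloor>c$k / 8\<rfloor> - \<lfloor>y$k / 8\<rfloor>\<bar> \<le> 2" for k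
      by simp
    have "Z \<in> around c"
      using h[of 1] h[of 2] unfolding around_def y[symmetric] square_of_def by (auto simp: abs_le_iff)
    then show "Z \<in> (\<Union>c\<in>A. around c)"
      using \<open>c \<in> A\<close> by blast
  qed
  then have "card {Z\<in>set w. occupied S Z} \<le> card (\<Union>c\<in>A. around c)"
    using \<open>finite A\<close> by (intro card_mono) (auto simp: around_def)
  also have "\<dots> \<le> (\<Sum>c\<in>A. card (around c))"
    using \<open>finite A\<close> by (rule card_UN_le)
  also have "\<dots> = 25 * card A"
    by (simp add: around_def card_cartesian_product)
  finally show ?thesis .
qed

lemma dist_edge_path_le:
  assumes occ: "well_occupied S n0" and ep: "edge_path S xs" and y: "y \<in> path_edges_union xs"
    and "n0 \<le> n" and hd: "norm (hd xs) \<le> 8 * real (n * n)"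
  shows "dist y (hd xs) \<le> 16 * (real n + 1) + 800 * real (length xs - 1)"
proof -
  obtain w where w: "successively king_adj w" "distinct w" "w \<noteq> []"
    "hd w = square_of (hd xs)" "last w = square_of y" "set w \<subseteq> square_of ` path_edges_union xs"
    using path_edges_union_king_walk[OF y] by blast
  define m where "m = length w - 1"
  have len: "length w = Suc m"
    unfolding m_def using w(3) by simp
  have dist_m: "dist y (hd xs) \<le> 16 * (real m + 1)"
    using king_walk_displacement[OF w(1,3)] w(4,5) len by (intro dist_le_of_square_of) auto
  show ?thesis
  proof (cases "m \<le> n")
    case True
    then show ?thesis
      using dist_m by simp
  next
    case False
    obtain A where A: "finite A" "card A \<le> length xs - 1"
      "\<And>y. y \<in> path_edges_union xs \<Longrightarrow> \<exists>c\<in>A. \<forall>j\<in>S. dist y c \<le> dist y j"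
      using edge_path_nearest_sites[OF ep] by blast
    have "real (n * n) \<le> real (m * m)"
      using False by (intro of_nat_mono mult_le_mono) simp_all
    then have "square_of (hd xs) \<in> central_squares m"
      using hd by (intro square_of_mem_central_squares) simp
    then have "w \<in> king_walks m"
      unfolding king_walks_def using w len by simp
    then have "Suc m < 2 * card {Z\<in>set w. occupied S Z}"
      using occ False \<open>n0 \<le> n\<close> unfolding well_occupied_def by simp
    also have "card {Z\<in>set w. occupied S Z} \<le> 25 * card A"
      using A(1) by (rule card_occupied_squares_le) (use w(6) A(3) in blast)
    finally have "Suc m < 50 * (length xs - 1)"
      using A(2) by linarith
    then show ?thesis
      using dist_m by simp
  qed
qed

section \<open>Counting king walks\<close>

definition walks_from :: "('a \<Rightarrow> 'a \<Rightarrow> bool) \<Rightarrow> 'a set \<Rightarrow> nat \<Rightarrow> 'a list set" where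
  "walks_from R B n = {w. successively R w \<and> length w = Suc n \<and> hd w \<in> B}"

lemma walks_from_0: "walks_from R B 0 = (\<lambda>b. [b]) ` B"
  unfolding walks_from_def by (auto simp: length_Suc_conv)

lemma walks_from_Suc:
  "walks_from R B (Suc n) = (\<lambda>(b, w). b # w) ` (SIGMA b:B. walks_from R {y. R b y} n)"
  unfolding walks_from_def by (auto simp: length_Suc_conv successively_Cons image_iff)

lemma card_walks_from_le:
  assumes "finite B" and "\<And>x. finite {y. R x y}" and "\<And>x. card {y. R x y} \<le> d"
  shows "finite (walks_from R B n) \<and> card (walks_from R B n) \<le> card B * d ^ n"
  using assms(1)
proof (induction n arbitrary: B)
  case 0
  then show ?case
    by (simp add: walks_from_0 card_image_le)
next
  case (Suc n)
  let ?\<Sigma> = "SIGMA b:B. walks_from R {y. R b y} n"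
  have fin: "finite ?\<Sigma>"
    using Suc.prems Suc.IH assms(2) by blast
  have "card (walks_from R B (Suc n)) \<le> card ?\<Sigma>"
    unfolding walks_from_Suc using fin by (rule card_image_le)
  also have "\<dots> = (\<Sum>b\<in>B. card (walks_from R {y. R b y} n))"
    using Suc.prems Suc.IH assms(2) by simp
  also have "\<dots> \<le> (\<Sum>b\<in>B. d * d ^ n)"
    using Suc.IH assms(2,3) by (intro sum_mono) (meson le_trans mult_le_mono1)
  finally show ?case
    using fin unfolding walks_from_Suc by (simp add: mult.commute)
qed

lemma king_adj_neighbours:
  "{Z'. king_adj Z Z'} = {fst Z - 1..fst Z + 1} \<times> {snd Z - 1..snd Z + 1}"
  unfolding king_adj_def by (auto simp: abs_le_iff)

lemma card_central_squares: "card (central_squares n) = (2 * n * n + 1)\<^sup>2"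
proof -
  have "card {- int (n * n)..int (n * n)} = nat (int (n * n) - (- int (n * n)) + 1)"
    by simp
  also have "int (n * n) - (- int (n * n)) + 1 = int (2 * n * n + 1)"
    by simp
  finally have "card {- int (n * n)..int (n * n)} = 2 * n * n + 1"
    by (simp only: nat_int)
  then show ?thesis
    by (simp only: central_squares_def card_cartesian_product power2_eq_square)
qed

lemma square_poly_le_pow_9: "(2 * n * n + 1)\<^sup>2 \<le> (9::nat) ^ n"
proof (induction n)
  case (Suc n)
  have "2 * Suc n * Suc n + 1 \<le> 3 * (2 * n * n + 1)"
    by (cases n) (simp_all add: algebra_simps)
  then have "(2 * Suc n * Suc n + 1)\<^sup>2 \<le> (3 * (2 * n * n + 1))\<^sup>2"
    by (rule power_mono) simp
  also have "\<dots> = 9 * (2 * n * n + 1)\<^sup>2"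
    unfolding power_mult_distrib by simp
  finally show ?case
    using Suc.IH by simp
qed simp

lemma finite_central_squares: "finite (central_squares n)"
  unfolding central_squares_def by simp

lemma card_king_walks_le: "finite (king_walks n) \<and> card (king_walks n) \<le> 81 ^ n"
proof -
  have sub: "king_walks n \<subseteq> walks_from king_adj (central_squares n) n"
    unfolding king_walks_def walks_from_def by auto
  have "finite (walks_from king_adj (central_squares n) n)"
    "card (walks_from king_adj (central_squares n) n) \<le> (2 * n * n + 1)\<^sup>2 * 9 ^ n"
    using card_walks_from_le[OF finite_central_squares, of king_adj 9 n]
    by (simp_all add: king_adj_neighbours card_cartesian_product card_central_squares)
  moreover have "(2 * n * n + 1)\<^sup>2 * 9 ^ n \<le> (9::nat) ^ n * 9 ^ n"
    using square_poly_le_pow_9[of n] by simp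
  moreover have "(9::nat) ^ n * 9 ^ n = 81 ^ n"
    by (simp add: power_mult_distrib[symmetric])
  ultimately show ?thesis
    using sub card_mono[OF _ sub] finite_subset[OF sub] by fastforce
qed

section \<open>Almost every Poisson configuration is well occupied\<close>

lemma poisson_process_void_probability:
  assumes pp: "poisson_process P N" and "A \<in> sets lborel" "bounded A"
  shows "{\<omega>\<in>space P. card (N \<omega> \<inter> A) = 0} \<in> sets P"
    "measure P {\<omega>\<in>space P. card (N \<omega> \<inter> A) = 0} = exp (- measure lborel A)"
proof -
  show *: "measure P {\<omega>\<in>space P. card (N \<omega> \<inter> A) = 0} = exp (- measure lborel A)"
    using pp assms(2,3) unfolding poisson_process_def by simp
  show "{\<omega>\<in>space P. card (N \<omega> \<inter> A) = 0} \<in> sets P"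
    using measure_notin_sets[of _ P] * by fastforce
qed

lemma inner_box_disjoint:
  assumes "Z \<noteq> Z'"
  shows "disjnt (inner_box Z) (inner_box Z')"
proof -
  have "fst Z \<noteq> fst Z' \<or> snd Z \<noteq> snd Z'"
    using assms by (simp add: prod_eq_iff)
  then have "real_of_int (fst Z) \<le> real_of_int (fst Z') - 1 \<or> real_of_int (fst Z') \<le> real_of_int (fst Z) - 1 \<or>
      real_of_int (snd Z) \<le> real_of_int (snd Z') - 1 \<or> real_of_int (snd Z') \<le> real_of_int (snd Z) - 1"
    by linarith
  then show ?thesis
    by (auto simp: disjnt_iff mem_inner_box)
qed

lemma measure_inner_boxes:
  assumes "finite T"
  shows "(\<Union>Z\<in>T. inner_box Z) \<in> sets lborel" "bounded (\<Union>Z\<in>T. inner_box Z)"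
    "measure lborel (\<Union>Z\<in>T. inner_box Z) = 16 * real (card T)"
proof -
  show "(\<Union>Z\<in>T. inner_box Z) \<in> sets lborel" "bounded (\<Union>Z\<in>T. inner_box Z)"
    using assms by (auto simp: inner_box_def)
  have "measure lborel (inner_box Z) = 16" for Z
  proof -
    have "inner_box Z \<noteq> {}"
      using mem_inner_box[of "\<chi> k. 8 * real_of_int (if k = 1 then fst Z else snd Z) + 2" Z] by auto
    then show ?thesis
      unfolding inner_box_def by (simp add: content_cbox_cart UNIV_2)
  qed
  moreover have "measure lborel (\<Union>Z\<in>T. inner_box Z) = (\<Sum>Z\<in>T. measure lborel (inner_box Z))"
    using assms inner_box_disjoint by (intro measure_UNION') (auto simp: inner_box_def pairwise_def)
  ultimately show "measure lborel (\<Union>Z\<in>T. inner_box Z) = 16 * real (card T)"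
    by simp
qed

definition half_empty_sets :: "nat \<Rightarrow> (int \<times> int) set set" where
  "half_empty_sets n = {T. \<exists>w\<in>king_walks n. T \<subseteq> set w \<and> Suc n \<le> 2 * card T}"

definition void_event :: "'w measure \<Rightarrow> ('w \<Rightarrow> pt set) \<Rightarrow> nat \<Rightarrow> 'w set" where
  "void_event P N n =
     (\<Union>T\<in>half_empty_sets n. {\<omega>\<in>space P. card (N \<omega> \<inter> (\<Union>Z\<in>T. inner_box Z)) = 0})"

lemma card_half_empty_sets_le: "finite (half_empty_sets n) \<and> card (half_empty_sets n) \<le> 81 ^ n * 2 ^ Suc n"
proof -
  have walks: "finite (king_walks n)" "card (king_walks n) \<le> 81 ^ n"
    using card_king_walks_le by auto
  have sub: "half_empty_sets n \<subseteq> (\<Union>w\<in>king_walks n. Pow (set w))"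
    unfolding half_empty_sets_def by blast
  have "card (half_empty_sets n) \<le> card (\<Union>w\<in>king_walks n. Pow (set w))"
    using walks(1) by (intro card_mono[OF _ sub]) simp
  also have "\<dots> \<le> (\<Sum>w\<in>king_walks n. card (Pow (set w)))"
    using walks(1) by (rule card_UN_le)
  also have "\<dots> = (\<Sum>w\<in>king_walks n. 2 ^ Suc n)"
    by (intro sum.cong) (auto simp: king_walks_def card_Pow distinct_card)
  also have "\<dots> \<le> 81 ^ n * 2 ^ Suc n"
    using walks(2) by simp
  finally show ?thesis
    using walks(1) finite_subset[OF sub] by blast
qed

lemma exp_8_ge_256: "256 \<le> exp (8::real)"
proof -
  have "(2::real) ^ 8 \<le> exp 1 ^ 8"
    using exp_ge_add_one_self[of 1] by (intro power_mono) simp_all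
  also have "exp 1 ^ 8 = exp (8::real)"
    using exp_of_nat_mult[of 8 "1::real"] by simp
  finally show ?thesis
    by simp
qed

lemma void_event_measure:
  assumes pp: "poisson_process P N"
  shows "void_event P N n \<in> sets P" "measure P (void_event P N n) \<le> 2 * (162 / 256) ^ n"
proof -
  interpret prob_space P
    using pp unfolding poisson_process_def by blast
  let ?E = "\<lambda>T. {\<omega>\<in>space P. card (N \<omega> \<inter> (\<Union>Z\<in>T. inner_box Z)) = 0}"
  have fin: "finite (half_empty_sets n)" "card (half_empty_sets n) \<le> 81 ^ n * 2 ^ Suc n"
    using card_half_empty_sets_le by auto
  have finT: "finite T" if "T \<in> half_empty_sets n" for T
    using that unfolding half_empty_sets_def by (auto intro: finite_subset)
  have E: "?E T \<in> sets P" "measure P (?E T) = exp (- 16 * real (card T))" if "T \<in> half_empty_sets n" for T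
    using poisson_process_void_probability[OF pp] measure_inner_boxes[OF finT[OF that]] by simp_all
  then show "void_event P N n \<in> sets P"
    unfolding void_event_def using fin(1) by blast
  have "measure P (void_event P N n) \<le> (\<Sum>T\<in>half_empty_sets n. measure P (?E T))"
    unfolding void_event_def using fin(1) E(1) by (intro finite_measure_subadditive_finite) auto
  also have "\<dots> \<le> (\<Sum>T\<in>half_empty_sets n. exp (- 8 * real (Suc n)))"
  proof (rule sum_mono)
    fix T assume T: "T \<in> half_empty_sets n"
    then have "real (Suc n) \<le> 2 * real (card T)"
      unfolding half_empty_sets_def by auto
    then show "measure P (?E T) \<le> exp (- 8 * real (Suc n))"
      using E(2)[OF T] by simp
  qed
  also have "\<dots> \<le> real (81 ^ n * 2 ^ Suc n) * exp (- 8 * real (Suc n))"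
    using fin(2) by (simp del: of_nat_Suc of_nat_mult of_nat_power)
  also have "\<dots> = 2 * (162 * exp (-8)) ^ n * exp (-8)"
  proof -
    have "exp (- 8 * real (Suc n)) = exp (-8) ^ Suc n"
      using exp_of_nat_mult[of "Suc n" "-8::real"] by (simp add: mult.commute)
    moreover have "(81::real) ^ n * 2 ^ n = 162 ^ n"
      by (simp add: power_mult_distrib[symmetric])
    ultimately show ?thesis
      by (simp add: power_mult_distrib)
  qed
  also have "\<dots> \<le> 2 * (162 / 256) ^ n * 1"
  proof (intro mult_mono mult_left_mono power_mono)
    show "162 * exp (-8::real) \<le> 162 / 256"
      using exp_8_ge_256 by (simp add: exp_minus field_simps)
  qed simp_all
  finally show "measure P (void_event P N n) \<le> 2 * (162 / 256) ^ n"
    by simp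
qed

lemma well_occupied_if_not_void:
  assumes void: "\<And>T. T \<in> half_empty_sets n \<Longrightarrow> S \<inter> (\<Union>Z\<in>T. inner_box Z) \<noteq> {}"
    and w: "w \<in> king_walks n"
  shows "Suc n < 2 * card {Z\<in>set w. occupied S Z}"
proof (rule ccontr)
  assume few: "\<not> ?thesis"
  define T where "T = {Z\<in>set w. \<not> occupied S Z}"
  have "card (set w) = Suc n"
    using w unfolding king_walks_def by (auto simp: distinct_card)
  moreover have "card (set w) = card {Z\<in>set w. occupied S Z} + card T"
    unfolding T_def by (subst card_Un_disjoint[symmetric]) (auto intro: arg_cong[where f = card])
  ultimately have "T \<in> half_empty_sets n"
    using w few unfolding half_empty_sets_def T_def by auto
  moreover have "S \<inter> (\<Union>Z\<in>T. inner_box Z) = {}"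
    unfolding T_def occupied_def by auto
  ultimately show False
    using void by blast
qed

lemma AE_well_occupied:
  assumes pp: "poisson_process P N"
  shows "AE \<omega> in P. \<exists>n0. well_occupied (N \<omega>) n0"
proof -
  interpret prob_space P
    using pp unfolding poisson_process_def by blast
  have "summable (\<lambda>n. measure P (void_event P N n))"
  proof (rule summable_comparison_test')
    show "summable (\<lambda>n. 2 * (162 / 256 :: real) ^ n)"
      by (intro summable_mult summable_geometric) simp
    show "norm (measure P (void_event P N n)) \<le> 2 * (162 / 256) ^ n" for n
      using void_event_measure(2)[OF pp] by simp
  qed
  then have "AE \<omega> in P. \<forall>\<^sub>F n in sequentially. \<omega> \<in> space P - void_event P N n"
    using void_event_measure(1)[OF pp] by (intro borel_cantelli_AE1) (auto simp: less_top[symmetric])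
  then show ?thesis
  proof (rule AE_mp, intro AE_I2 impI)
    fix \<omega> assume \<omega>: "\<omega> \<in> space P" and ev: "\<forall>\<^sub>F n in sequentially. \<omega> \<in> space P - void_event P N n"
    then obtain n0 where n0: "\<And>n. n0 \<le> n \<Longrightarrow> \<omega> \<notin> void_event P N n"
      unfolding eventually_sequentially by blast
    have "well_occupied (N \<omega>) n0"
      unfolding well_occupied_def
    proof (intro allI impI ballI)
      fix n w assume "n0 \<le> n" "w \<in> king_walks n"
      show "Suc n < 2 * card {Z\<in>set w. occupied (N \<omega>) Z}"
      proof (rule well_occupied_if_not_void[OF _ \<open>w \<in> king_walks n\<close>], rule notI)
        fix T assume "T \<in> half_empty_sets n" "N \<omega> \<inter> (\<Union>Z\<in>T. inner_box Z) = {}"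
        then have "\<omega> \<in> void_event P N n"
          using \<omega> unfolding void_event_def by (intro UN_I[of T]) simp_all
        then show False
          using n0 \<open>n0 \<le> n\<close> by blast
      qed
    qed
    then show "\<exists>n0. well_occupied (N \<omega>) n0" ..
  qed
qed

section \<open>Confinement of test paths\<close>

lemma edge_path_confined:
  assumes occ: "well_occupied S n0" and lf: "locally_finite S" and "n0 \<le> n"
    and scale: "(C + 1) * t + 24 * real n + 38 \<le> 8 * real (n * n)" "80 * real n + 104 < t"
    and x: "norm x \<le> C * t" and v: "norm v = 1"
    and p: "closest_point (voronoi_vertices S) x p"
    and q: "closest_point (voronoi_vertices S) (x + t *\<^sub>R v) q"
    and xs: "edge_path S xs" "hd xs = p" "last xs = q"
    and y: "y \<in> path_edges_union xs"
  shows "dist y x \<le> 1600 * real (length xs - 1)"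
proof -
  let ?h = "16 * real n + 24" and ?K = "real (length xs - 1)"
  have "t > 0"
    using scale(2) by simp
  have dist_closest: "dist z c \<le> ?h"
    if c: "closest_point (voronoi_vertices S) z c" and z: "norm z \<le> (C + 1) * t" for z c
  proof -
    obtain u where "u \<in> voronoi_vertices S" "dist z u \<le> ?h"
      using voronoi_vertex_near[OF occ lf \<open>n0 \<le> n\<close>, of z] z scale(1) by force
    then show ?thesis
      using c unfolding closest_point_def by force
  qed
  have "norm x \<le> (C + 1) * t"
    using x \<open>t > 0\<close> by (simp add: distrib_right)
  then have xp: "dist x p \<le> ?h"
    by (rule dist_closest[OF p])
  have xq: "dist (x + t *\<^sub>R v) q \<le> ?h"
    using dist_closest[OF q] norm_triangle_ineq[of x "t *\<^sub>R v"] x v \<open>t > 0\<close> by (simp add: algebra_simps)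
  have "norm p \<le> 8 * real (n * n)"
    using xp x scale(1) norm_triangle_ineq2[of p x] \<open>t > 0\<close> by (simp add: dist_norm norm_minus_commute algebra_simps)
  then have reach: "dist z p \<le> 16 * (real n + 1) + 800 * ?K" if "z \<in> path_edges_union xs" for z
    using dist_edge_path_le[OF occ xs(1) that \<open>n0 \<le> n\<close>] xs(2) by simp
  have "2 \<le> length xs"
    using y unfolding path_edges_union_def by auto
  then have "dist q p \<le> 16 * (real n + 1) + 800 * ?K"
    using reach endpoints_in_path_edges_union(2) xs(3) by blast
  moreover have "t \<le> dist x p + dist p q + dist q (x + t *\<^sub>R v)"
    using dist_triangle[of x "x + t *\<^sub>R v" p] dist_triangle[of p "x + t *\<^sub>R v" q] v \<open>t > 0\<close>
    by (simp add: dist_norm)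
  moreover have "dist y x \<le> dist y p + dist p x"
    by (rule dist_triangle)
  (* t <= 2 ?h + dist q p and t > 3 ?h + 32 (n + 1), so 800 ?K dominates ?h + 16 (n + 1) *)
  ultimately show ?thesis
    using reach[OF y] xp xq scale(2) by (simp add: dist_commute)
qed

lemma eventually_good_scale:
  "\<forall>\<^sub>F t in at_top. \<exists>n\<ge>n0. (C + 1) * t + 24 * real n + 38 \<le> 8 * real (n * n) \<and> 80 * real n + 104 < t"
proof -
  have "\<forall>\<^sub>F t in at_top. (C + 1) * t + 24 * (t / 100) + 38 \<le> 8 * (t / 100 - 1)\<^sup>2"
    by real_asymp
  then have "\<forall>\<^sub>F t in at_top. (C + 1) * t + 24 * (t / 100) + 38 \<le> 8 * (t / 100 - 1)\<^sup>2 \<and>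
      100 * (real n0 + 1) \<le> t \<and> 520 < t"
    by (intro eventually_conj eventually_ge_at_top eventually_gt_at_top)
  then show ?thesis
  proof (rule eventually_mono)
    fix t :: real
    assume t: "(C + 1) * t + 24 * (t / 100) + 38 \<le> 8 * (t / 100 - 1)\<^sup>2 \<and> 100 * (real n0 + 1) \<le> t \<and> 520 < t"
    define n where "n = nat \<lfloor>t / 100\<rfloor>"
    have n: "t / 100 - 1 < real n" "real n \<le> t / 100"
      using t unfolding n_def by linarith+
    have "8 * (t / 100 - 1)\<^sup>2 \<le> 8 * real (n * n)"
      using n t power_mono[of "t / 100 - 1" "real n" 2] by (simp add: power2_eq_square)
    then show "\<exists>n\<ge>n0. (C + 1) * t + 24 * real n + 38 \<le> 8 * real (n * n) \<and> 80 * real n + 104 < t"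
      using n t by (intro exI[of _ n]) auto
  qed
qed

lemma test_paths_confined:
  assumes occ: "well_occupied S n0" and lf: "locally_finite S"
  shows "\<forall>\<^sub>F t in at_top.
     \<forall>x v p q xs. norm x \<le> C * t \<longrightarrow> norm v = 1 \<longrightarrow>
       closest_point (voronoi_vertices S) x p \<longrightarrow>
       closest_point (voronoi_vertices S) (x + t *\<^sub>R v) q \<longrightarrow>
       edge_path S xs \<longrightarrow> hd xs = p \<longrightarrow> last xs = q \<longrightarrow>
       real (length xs - 1) \<le> t * M \<longrightarrow>
       (\<forall>y\<in>path_edges_union xs. dist y x \<le> 1600 * M * t)"
  using eventually_good_scale[of n0 C]
proof (rule eventually_mono, intro allI impI ballI)
  fix t x v p q xs y
  assume "\<exists>n\<ge>n0. (C + 1) * t + 24 * real n + 38 \<le> 8 * real (n * n) \<and> 80 * real n + 104 < t"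
    and path: "norm x \<le> C * t" "norm v = 1" "closest_point (voronoi_vertices S) x p"
      "closest_point (voronoi_vertices S) (x + t *\<^sub>R v) q" "edge_path S xs" "hd xs = p" "last xs = q"
    and short: "real (length xs - 1) \<le> t * M" and y: "y \<in> path_edges_union xs"
  then obtain n where "n0 \<le> n" "(C + 1) * t + 24 * real n + 38 \<le> 8 * real (n * n)" "80 * real n + 104 < t"
    by blast
  then have "dist y x \<le> 1600 * real (length xs - 1)"
    by (rule edge_path_confined[OF occ lf _ _ _ path y])
  then show "dist y x \<le> 1600 * M * t"
    using short by (simp add: mult_ac)
qed

theorem mainTheorem9:
  fixes P :: "'w measure" and N :: "'w \<Rightarrow> pt set"
  assumes "poisson_process P N"
  shows "\<exists>C0::real. AE \<omega> in P. \<forall>C>0. \<forall>M>0. \<forall>\<^sub>F t in at_top.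
     \<forall>x v p q xs. norm x \<le> C * t \<longrightarrow> norm v = 1 \<longrightarrow>
       closest_point (voronoi_vertices (N \<omega>)) x p \<longrightarrow>
       closest_point (voronoi_vertices (N \<omega>)) (x + t *\<^sub>R v) q \<longrightarrow>
       edge_path (N \<omega>) xs \<longrightarrow> hd xs = p \<longrightarrow> last xs = q \<longrightarrow>
       real (length xs - 1) \<le> t * M \<longrightarrow>
       (\<forall>y\<in>path_edges_union xs. dist y x \<le> C0 * M * t)"
proof -
  have "AE \<omega> in P. locally_finite (N \<omega>)"
  proof (rule AE_I2)
    fix \<omega> assume "\<omega> \<in> space P"
    then show "locally_finite (N \<omega>)"
      using assms unfolding poisson_process_def locally_finite_def by blast
  qed
  with AE_well_occupied[OF assms] have "AE \<omega> in P. \<exists>n0. well_occupied (N \<omega>) n0 \<and> locally_finite (N \<omega>)"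
    by eventually_elim blast
  then show ?thesis
    by (intro exI[of _ 1600]) (elim eventually_mono conjE exE, intro allI impI test_paths_confined)
qed

end
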